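(* Let $k>0$ be an integer and let $U_k$ be the random variable on $G(n,p)$ counting proper star $k$-separations. Then \[\mathbb E(U_k)\le n^2\binom{n-1}{k}(1-p)^{2k+1}\big(p+(1-p)^{k+1}\big)^{n-k-2}\] and \[\mathbb E(U_k)\le k\,n^2\binom{n-1}{k}(1-p)^{k+1}p^2\big(p+(1-p)^{k+1}\big)^{n-k-2}.\]
   Context: $G(n,p)$ is the Erdős–Rényi random graph on vertex set $V$, $|V|=n$, each edge independently present with probability $p$. For a graph $\Delta$ with vertex set $W$, a separation is $S\subset W$ with $S\ne\varnothing$, $S\ne W$ and no edges between $S$ and $W\setminus S$. $\mathrm{st}(a)$ is $a$ with its neighbours. A star separation of $\Gamma$ is a pair $(a,S)$ with $a\in V$, $S\subset V\setminus\mathrm{st}(a)$, such that $S$ is a separation of the full subgraph $\Gamma\setminus\mathrm{st}(a)$; it is a star $k$-separation if $|S|=k$, and proper if $S$ is not a separation of $\Gamma$. *)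

theory Defs
  imports Complex_Main
begin

text \<open>Simple graphs on a vertex set V are represented by their edge sets:
  sets of 2-element subsets of V.\<close>

definition all_edges :: "'a set \<Rightarrow> 'a set set" where
  "all_edges V = {e. e \<subseteq> V \<and> card e = 2}"

definition graphs_on :: "'a set \<Rightarrow> 'a set set set" where
  "graphs_on V = Pow (all_edges V)"

definition gnp_weight :: "'a set \<Rightarrow> real \<Rightarrow> 'a set set \<Rightarrow> real" where
  "gnp_weight V p E = p ^ card E * (1 - p) ^ (card (all_edges V) - card E)"

definition gnp_expectation :: "'a set \<Rightarrow> real \<Rightarrow> ('a set set \<Rightarrow> real) \<Rightarrow> real" where
  "gnp_expectation V p X = (\<Sum>E\<in>graphs_on V. gnp_weight V p E * X E)"

definition st :: "'a set \<Rightarrow> 'a set set \<Rightarrow> 'a \<Rightarrow> 'a set" where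
  "st V E a = insert a {b \<in> V. {a, b} \<in> E}"

definition is_separation :: "'a set set \<Rightarrow> 'a set \<Rightarrow> 'a set \<Rightarrow> bool" where
  "is_separation E W S \<longleftrightarrow> S \<subseteq> W \<and> S \<noteq> {} \<and> S \<noteq> W \<and>
     (\<forall>x\<in>S. \<forall>y\<in>W - S. {x, y} \<notin> E)"

definition is_star_separation :: "'a set \<Rightarrow> 'a set set \<Rightarrow> 'a \<Rightarrow> 'a set \<Rightarrow> bool" where
  "is_star_separation V E a S \<longleftrightarrow> a \<in> V \<and> S \<subseteq> V - st V E a \<and>
     is_separation E (V - st V E a) S"

definition is_proper_star_k_separation ::
    "'a set \<Rightarrow> 'a set set \<Rightarrow> nat \<Rightarrow> 'a \<Rightarrow> 'a set \<Rightarrow> bool" where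
  "is_proper_star_k_separation V E k a S \<longleftrightarrow>
     is_star_separation V E a S \<and> card S = k \<and> \<not> is_separation E V S"

definition U :: "'a set \<Rightarrow> nat \<Rightarrow> 'a set set \<Rightarrow> nat" where
  "U V k E = card {(a, S). is_proper_star_k_separation V E k a S}"

end

theory Submission
  imports Defs
begin

text \<open>Fix a vertex \<open>a\<close> and a \<open>k\<close>-set \<open>S\<close> not containing it, and write \<open>q = 1 - p\<close>.
  If \<open>(a, S)\<close> is a star separation, no edge joins \<open>a\<close> to \<open>S\<close>, and every other vertex \<open>x\<close> is
  adjacent to \<open>a\<close> or has no neighbour in \<open>S\<close>. These conditions live on the pairwise disjoint
  edge sets joining each vertex to \<open>{a} \<union> S\<close>, so they are independent and hold with probability
  \<open>q^k (p + q^(k+1))^m\<close>, \<open>m = n - k - 1\<close>. Properness rules out two sub-events of probabilities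
  \<open>q^k (q^k)^m\<close> (no \<open>x\<close> has a neighbour in \<open>S\<close>: then \<open>S\<close> separates the whole graph) and
  \<open>q^k p^m\<close> (every \<open>x\<close> is adjacent to \<open>a\<close>: then \<open>S\<close> is all of \<open>V - st(a)\<close>). Subtracting
  the larger one and estimating the difference of \<open>m\<close>-th powers gives both bounds for a single
  pair, and there are \<open>n \<cdot> binom(n-1, k)\<close> pairs. For the second bound with \<open>q > p\<^sup>2\<close> the
  difference \<open>(p + q^(k+1))^m - (q^k)^m\<close> is controlled by a geometric sum in the ratio \<open>q / (p + q\<^sup>2)\<close>.\<close>

section \<open>Elementary estimates\<close>

lemma power_diff_le_geometric:
  fixes r s x :: real
  assumes "0 \<le> s" "s \<le> r" "0 \<le> x" "s \<le> x * r"
  shows "r ^ m - s ^ m \<le> (r - s) * (\<Sum>j<m. x ^ j) * r ^ (m - 1)"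
proof -
  have "(\<Sum>i<m. s ^ (m - Suc i) * r ^ i) \<le> (\<Sum>i<m. x ^ (m - Suc i) * r ^ (m - 1))"
  proof (rule sum_mono)
    fix i assume "i \<in> {..<m}"
    then have exp: "m - 1 = (m - Suc i) + i" by simp
    have "s ^ (m - Suc i) * r ^ i \<le> (x * r) ^ (m - Suc i) * r ^ i"
      using assms by (intro mult_right_mono power_mono) auto
    also have "\<dots> = x ^ (m - Suc i) * r ^ (m - 1)"
      unfolding exp power_add power_mult_distrib by (simp only: mult.assoc)
    finally show "s ^ (m - Suc i) * r ^ i \<le> x ^ (m - Suc i) * r ^ (m - 1)" .
  qed
  also have "\<dots> = (\<Sum>j<m. x ^ j) * r ^ (m - 1)"
    using sum.nat_diff_reindex[of "\<lambda>j. x ^ j * r ^ (m - 1)" m] by (simp add: sum_distrib_right)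
  finally have "(r - s) * (\<Sum>i<m. s ^ (m - Suc i) * r ^ i) \<le> (r - s) * ((\<Sum>j<m. x ^ j) * r ^ (m - 1))"
    using assms(2) by (intro mult_left_mono) auto
  then show ?thesis by (simp only: power_diff_sumr2 mult.assoc)
qed

text \<open>\<open>p\<^sup>2 < 1 - p\<close> means \<open>p < (\<surd>5 - 1)/2\<close>, so \<open>q > (3 - \<surd>5)/2 \<approx> 0.382\<close>.\<close>

lemma golden_ratio_lower:
  fixes p q :: real
  assumes "q = 1 - p" "p\<^sup>2 < q"
  shows "19/50 \<le> q"
proof (rule ccontr)
  assume "\<not> 19/50 \<le> q"
  then have "(31/50)\<^sup>2 \<le> p\<^sup>2" using assms(1) by (intro power_mono) auto
  then show False using assms \<open>\<not> 19/50 \<le> q\<close> by (simp add: power2_eq_square)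
qed

lemma one_plus_ratio_le:
  fixes p q :: real
  assumes "q = 1 - p" "p\<^sup>2 < q"
  shows "1 + q / (p + q\<^sup>2) \<le> 4 * q"
proof -
  have q: "19/50 \<le> q" using golden_ratio_lower[OF assms] .
  \<comment> \<open>a cubic in \<open>q\<close>, written so that it is visibly positive for \<open>q \<ge> 19/50\<close>\<close>
  have cubic: "(4 * q - 1) * (p + q\<^sup>2) - q
      = (q - 19/50) * (4 * (q - 87/200)\<^sup>2 + 19207/10000) + 1093/62500"
    unfolding assms(1) power2_eq_square by (simp add: algebra_simps) (simp add: divide_simps)
  have "0 \<le> (q - 19/50) * (4 * (q - 87/200)\<^sup>2 + 19207/10000)"
    using q by simp
  then have "0 \<le> (4 * q - 1) * (p + q\<^sup>2) - q"
    unfolding cubic by simp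
  moreover have "0 < p + q\<^sup>2"
  proof -
    have "p + q\<^sup>2 = q + p\<^sup>2" unfolding assms(1) power2_eq_square by (simp add: algebra_simps)
    then show ?thesis using q by (simp add: add_pos_nonneg)
  qed
  ultimately have "q / (p + q\<^sup>2) \<le> 4 * q - 1" by (simp add: pos_divide_le_eq)
  then show ?thesis by simp
qed

lemma ratio_step_le:
  fixes p q c s :: real
  assumes "0 \<le> p" "p \<le> 1" "q = 1 - p" "1 \<le> c * p * q" "s \<le> (c - 1) * q"
  shows "1 + q / (p + q\<^sup>2) * s \<le> c * q"
proof -
  have "p \<noteq> 0" using assms(4) by auto
  then have den: "0 < p + q\<^sup>2" using assms(1) by (simp add: add_pos_nonneg)
  then have "0 \<le> q / (p + q\<^sup>2)" using assms(2,3) by simp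
  with assms(5) have "q / (p + q\<^sup>2) * s \<le> q / (p + q\<^sup>2) * ((c - 1) * q)"
    by (rule mult_left_mono)
  also have "\<dots> \<le> c * q - 1"
  proof -
    have "c * q * (p + q\<^sup>2) - (p + q\<^sup>2) - (c - 1) * q\<^sup>2 = p * (c * p * q - 1)"
      unfolding assms(3) power2_eq_square by (simp add: algebra_simps)
    moreover have "0 \<le> p * (c * p * q - 1)" using assms(1,4) by simp
    ultimately have "(c - 1) * q * q \<le> (c * q - 1) * (p + q\<^sup>2)"
      by (simp add: power2_eq_square algebra_simps)
    then have "(c - 1) * q * q / (p + q\<^sup>2) \<le> c * q - 1"
      using den by (simp add: pos_divide_le_eq)
    then show ?thesis by (simp add: mult.commute mult.left_commute)
  qed
  finally show ?thesis by simp
qed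

lemma sum_power_ratio_le:
  fixes p q :: real
  assumes p: "0 \<le> p" and q: "q = 1 - p" and pq: "p\<^sup>2 < q"
  shows "(\<Sum>j<m. (q / (p + q\<^sup>2)) ^ j) \<le> (real m + 2) * q"
proof (induction m)
  case 0
  have "0 \<le> q" using pq zero_le_power2[of p] by linarith
  then show ?case by simp
next
  case (Suc m)
  define x where "x = q / (p + q\<^sup>2)"
  have q_low: "19/50 \<le> q" using golden_ratio_lower[OF q pq] .
  have p_le_1: "p \<le> 1" using q_low q by simp
  have den_eq: "p + q\<^sup>2 = q + p\<^sup>2" unfolding q power2_eq_square by (simp add: algebra_simps)
  have "0 \<le> x" "x \<le> 1" unfolding x_def den_eq using q_low by (simp_all add: add_pos_nonneg)
  have sum_Suc: "(\<Sum>j<Suc m. x ^ j) = 1 + x * (\<Sum>j<m. x ^ j)"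
    by (simp add: sum.lessThan_Suc_shift sum_distrib_left del: sum.lessThan_Suc)
  consider "1 \<le> (real m + 3) * p * q" | "(real m + 3) * p * q < 1" "1/2 \<le> q" | "m \<le> 1"
  proof (cases "1 \<le> (real m + 3) * p * q \<or> 1/2 \<le> q")
    case False
    have "0 \<le> (q - 19/50) * (31/50 - q)" using q_low False by simp
    then have "1/5 \<le> p * q" unfolding q by (simp add: algebra_simps)
    then have "(real m + 3) * (1/5) \<le> (real m + 3) * (p * q)" by (rule mult_left_mono) simp
    moreover have "(real m + 3) * (p * q) < 1" using False by (simp add: mult.assoc)
    ultimately have "(real m + 3) * (1/5) < 1" by (rule le_less_trans)
    then have "m \<le> 1" by simp
    then show thesis by (rule that(3))
  qed (metis not_le that(1,2))
  then show ?case
  proof cases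
    case 1
    have "(\<Sum>j<m. x ^ j) \<le> (real m + 3 - 1) * q" using Suc by (simp add: x_def add.commute)
    from ratio_step_le[OF p p_le_1 q 1 this] have "1 + x * (\<Sum>j<m. x ^ j) \<le> (real m + 3) * q"
      unfolding x_def .
    then show ?thesis unfolding x_def[symmetric] sum_Suc by (simp add: add.commute)
  next
    case 2
    have "(real m + 3) * p * (1/2) \<le> (real m + 3) * p * q"
      using \<open>1/2 \<le> q\<close> p by (intro mult_left_mono) auto
    then have "(real m + 3) * p * (1/2) < 1" using 2(1) by (rule le_less_trans)
    then have "(real m + 3) * p \<le> 2" by simp
    then have "real (Suc m) \<le> (real (Suc m) + 2) * q" unfolding q by (simp add: algebra_simps)
    moreover have "(\<Sum>j<Suc m. x ^ j) \<le> (\<Sum>j<Suc m. 1)"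
      using \<open>0 \<le> x\<close> \<open>x \<le> 1\<close> by (intro sum_mono power_le_one) auto
    ultimately show ?thesis unfolding x_def by simp
  next
    case 3
    then consider "m = 0" | "m = 1" by linarith
    then show ?thesis
    proof cases
      case 1
      then show ?thesis using q_low by simp
    next
      case 2
      have "(\<Sum>j<Suc m. x ^ j) = 1 + x" by (simp add: 2 numeral_2_eq_2)
      then show ?thesis using one_plus_ratio_le[OF q pq] by (simp add: 2 x_def)
    qed
  qed
qed

lemma star_bound_first:
  fixes p q r :: real
  assumes "0 \<le> p" "p \<le> 1" "q = 1 - p" "r = p + q ^ (k + 1)"
  shows "q ^ k * (r ^ m - max (p ^ m) ((q ^ k) ^ m)) \<le> real m * q ^ (2 * k + 1) * r ^ (m - 1)"
proof -
  have "0 \<le> q" using assms by simp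
  have "r ^ m - p ^ m \<le> (r - p) * (\<Sum>j<m. 1 ^ j) * r ^ (m - 1)"
    using assms \<open>0 \<le> q\<close> by (intro power_diff_le_geometric) auto
  then have "r ^ m - max (p ^ m) ((q ^ k) ^ m) \<le> real m * q ^ (k + 1) * r ^ (m - 1)"
    using assms(4) by (simp add: mult.commute)
  then have "q ^ k * (r ^ m - max (p ^ m) ((q ^ k) ^ m)) \<le> q ^ k * (real m * q ^ (k + 1) * r ^ (m - 1))"
    using \<open>0 \<le> q\<close> by (intro mult_left_mono) auto
  also have "\<dots> = real m * (q ^ k * q ^ (k + 1)) * r ^ (m - 1)"
    by (simp only: mult_ac)
  also have "q ^ k * q ^ (k + 1) = q ^ (2 * k + 1)"
    by (simp add: mult_2 flip: power_add)
  finally show ?thesis .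
qed

lemma star_bound_second:
  fixes p q r :: real
  assumes p: "0 \<le> p" "p \<le> 1" and q: "q = 1 - p" and r: "r = p + q ^ (k + 1)" and k: "1 \<le> k"
  shows "q ^ k * (r ^ m - max (p ^ m) ((q ^ k) ^ m))
    \<le> real k * (real m + real k + 1) * p\<^sup>2 * q ^ (k + 1) * r ^ (m - 1)"
proof -
  have "0 \<le> q" "q \<le> 1" using p q by auto
  have "0 \<le> r" using p r \<open>0 \<le> q\<close> by simp
  have qk_le_q: "q ^ k \<le> q"
    using power_decreasing[of 1 k q] \<open>0 \<le> q\<close> \<open>q \<le> 1\<close> k by simp
  have "1 * (real m + real k + 1) \<le> real k * (real m + real k + 1)"
    using k by (intro mult_right_mono) auto
  then have m_le: "real m \<le> real k * (real m + real k + 1)" by (rule order_trans[rotated]) simp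
  show ?thesis
  proof (cases "q \<le> p\<^sup>2")
    case True
    have "q ^ (2 * k + 1) = q ^ k * q ^ (k + 1)"
      by (simp add: mult_2 flip: power_add)
    then have "q ^ k * (r ^ m - max (p ^ m) ((q ^ k) ^ m)) \<le> (q ^ k * real m) * (q ^ (k + 1) * r ^ (m - 1))"
      using star_bound_first[OF p q r, of m] by (simp only: mult_ac)
    also have "\<dots> \<le> (p\<^sup>2 * (real k * (real m + real k + 1))) * (q ^ (k + 1) * r ^ (m - 1))"
      using qk_le_q True m_le \<open>0 \<le> q\<close> \<open>0 \<le> r\<close>
      by (intro mult_right_mono mult_mono) auto
    finally show ?thesis by (simp only: mult_ac)
  next
    case False
    define x where "x = q / (p + q\<^sup>2)"
    have "0 < q" using False zero_le_power2[of p] by linarith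
    then have den: "0 < p + q\<^sup>2" using p by (simp add: add_nonneg_pos)
    have "0 \<le> x" unfolding x_def using \<open>0 < q\<close> den by simp
    have r_minus: "r - q ^ k = p * (1 - q ^ k)" unfolding r q by (simp add: algebra_simps)
    have gap: "r - q ^ k \<le> real k * p\<^sup>2"
    proof -
      have "1 - real k * p \<le> q ^ k" using Bernoulli_inequality[of "- p" k] p q by simp
      then have "p * (1 - q ^ k) \<le> p * (real k * p)" using p by (intro mult_left_mono) auto
      with r_minus show ?thesis by (simp add: power2_eq_square mult_ac)
    qed
    have "q ^ k \<le> r"
    proof -
      have "q ^ k \<le> 1" using \<open>0 \<le> q\<close> \<open>q \<le> 1\<close> by (rule power_le_one)
      then have "0 \<le> p * (1 - q ^ k)" using p by simp
      with r_minus show ?thesis by simp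
    qed
    have "q ^ k \<le> x * r"
    proof -
      have "q ^ k * p \<le> q * p" using qk_le_q p by (intro mult_right_mono) auto
      then have "q ^ k * (p + q\<^sup>2) \<le> q * r" by (simp add: r power2_eq_square algebra_simps)
      then show ?thesis unfolding x_def using den by (simp add: pos_le_divide_eq mult.commute)
    qed
    have "r ^ m - (q ^ k) ^ m \<le> (r - q ^ k) * (\<Sum>j<m. x ^ j) * r ^ (m - 1)"
      using \<open>q ^ k \<le> r\<close> \<open>q ^ k \<le> x * r\<close> \<open>0 \<le> q\<close> den
      by (intro power_diff_le_geometric) (auto simp: x_def)
    also have "\<dots> \<le> (real k * p\<^sup>2) * ((real m + 2) * q) * r ^ (m - 1)"
      using gap sum_power_ratio_le[OF p(1) q, of m, folded x_def] False \<open>0 \<le> x\<close>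
        \<open>q ^ k \<le> r\<close> \<open>0 \<le> r\<close>
      by (intro mult_right_mono mult_mono) (auto intro: sum_nonneg)
    finally have "q ^ k * (r ^ m - max (p ^ m) ((q ^ k) ^ m))
        \<le> q ^ k * ((real k * p\<^sup>2) * ((real m + 2) * q) * r ^ (m - 1))"
      using \<open>0 \<le> q\<close> by (intro mult_left_mono) auto
    also have "\<dots> \<le> q ^ k * ((real k * p\<^sup>2) * ((real m + real k + 1) * q) * r ^ (m - 1))"
      using k \<open>0 \<le> q\<close> \<open>0 \<le> r\<close> by (intro mult_left_mono mult_right_mono) auto
    also have "\<dots> = real k * (real m + real k + 1) * p\<^sup>2 * (q * q ^ k) * r ^ (m - 1)"
      by (simp only: mult_ac)
    finally show ?thesis by simp
  qed
qed

section \<open>Random subsets\<close>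

lemma prod_of_bool_eq:
  "finite A \<Longrightarrow> (\<Prod>x\<in>A. of_bool (P x)) = (of_bool (\<forall>x\<in>A. P x) :: 'b::comm_semiring_1)"
  by (induction A rule: finite_induct) auto

definition bernoulli_weight :: "'b set \<Rightarrow> real \<Rightarrow> 'b set \<Rightarrow> real" where
  "bernoulli_weight A p B = p ^ card B * (1 - p) ^ (card A - card B)"

definition bernoulli_expectation :: "'b set \<Rightarrow> real \<Rightarrow> ('b set \<Rightarrow> real) \<Rightarrow> real" where
  "bernoulli_expectation A p f = (\<Sum>B\<in>Pow A. bernoulli_weight A p B * f B)"

lemma gnp_expectation_eq_bernoulli:
  "gnp_expectation V p X = bernoulli_expectation (all_edges V) p X"
  unfolding gnp_expectation_def graphs_on_def gnp_weight_def
    bernoulli_expectation_def bernoulli_weight_def ..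

lemma bernoulli_weight_nonneg: "0 \<le> p \<Longrightarrow> p \<le> 1 \<Longrightarrow> 0 \<le> bernoulli_weight A p B"
  unfolding bernoulli_weight_def by simp

lemma bernoulli_expectation_const:
  assumes "finite A"
  shows "bernoulli_expectation A p (\<lambda>_. c) = c"
proof -
  have "(\<Sum>B\<in>Pow A. bernoulli_weight A p B) = (\<Sum>B\<in>Pow A. (\<Prod>_\<in>B. p) * (\<Prod>_\<in>A - B. 1 - p))"
    using assms by (intro sum.cong) (auto simp: bernoulli_weight_def card_Diff_subset finite_subset)
  also have "\<dots> = (\<Prod>_\<in>A. p + (1 - p))"
    by (rule prod_add[OF assms, symmetric])
  finally show ?thesis
    unfolding bernoulli_expectation_def by (simp flip: sum_distrib_right)
qed

lemma bernoulli_expectation_add: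
  "bernoulli_expectation A p (\<lambda>B. f B + g B)
    = bernoulli_expectation A p f + bernoulli_expectation A p g"
  unfolding bernoulli_expectation_def by (simp add: distrib_left sum.distrib)

lemma bernoulli_expectation_diff:
  "bernoulli_expectation A p (\<lambda>B. f B - g B)
    = bernoulli_expectation A p f - bernoulli_expectation A p g"
  unfolding bernoulli_expectation_def by (simp add: right_diff_distrib sum_subtractf)

lemma bernoulli_expectation_mono:
  assumes "0 \<le> p" "p \<le> 1" "\<And>B. B \<subseteq> A \<Longrightarrow> f B \<le> g B"
  shows "bernoulli_expectation A p f \<le> bernoulli_expectation A p g"
  unfolding bernoulli_expectation_def
  using assms bernoulli_weight_nonneg by (intro sum_mono mult_left_mono) auto

lemma sum_Pow_split:
  assumes "A \<subseteq> Y"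
  shows "(\<Sum>E\<in>Pow Y. g E) = (\<Sum>B\<in>Pow A. \<Sum>D\<in>Pow (Y - A). g (B \<union> D))"
proof -
  have "bij_betw (\<lambda>(B, D). B \<union> D) (Pow A \<times> Pow (Y - A)) (Pow Y)"
    by (rule bij_betw_byWitness[where f' = "\<lambda>E. (E \<inter> A, E - A)"]) (use assms in auto)
  then have "(\<Sum>E\<in>Pow Y. g E) = (\<Sum>(B, D)\<in>Pow A \<times> Pow (Y - A). g (B \<union> D))"
    by (simp add: sum.reindex_bij_betw[symmetric] case_prod_unfold)
  then show ?thesis by (simp add: sum.cartesian_product)
qed

lemma bernoulli_weight_Un:
  assumes "finite Y" "A \<subseteq> Y" "B \<subseteq> A" "D \<subseteq> Y - A"
  shows "bernoulli_weight Y p (B \<union> D) = bernoulli_weight A p B * bernoulli_weight (Y - A) p D"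
proof -
  have fin: "finite A" "finite B" "finite D"
    using assms by (auto intro: finite_subset)
  have "card (B \<union> D) = card B + card D"
    using fin assms by (intro card_Un_disjoint) auto
  moreover have "card Y = card A + card (Y - A)"
    using assms fin by (simp add: card_Diff_subset card_mono)
  moreover have "card B \<le> card A" "card D \<le> card (Y - A)"
    using fin assms by (auto intro: card_mono)
  ultimately have "card Y - card (B \<union> D) = (card A - card B) + (card (Y - A) - card D)"
    by linarith
  then show ?thesis
    unfolding bernoulli_weight_def \<open>card (B \<union> D) = card B + card D\<close> by (simp add: power_add mult_ac)
qed

lemma bernoulli_expectation_mult_split:
  assumes "finite Y" "A \<subseteq> Y"
  shows "bernoulli_expectation Y p (\<lambda>E. f (E \<inter> A) * g (E - A))
    = bernoulli_expectation A p f * bernoulli_expectation (Y - A) p g"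
proof -
  have "bernoulli_expectation Y p (\<lambda>E. f (E \<inter> A) * g (E - A))
      = (\<Sum>B\<in>Pow A. \<Sum>D\<in>Pow (Y - A). (bernoulli_weight A p B * f B) * (bernoulli_weight (Y - A) p D * g D))"
    unfolding bernoulli_expectation_def sum_Pow_split[OF assms(2)]
  proof (intro sum.cong refl)
    fix B D assume "B \<in> Pow A" "D \<in> Pow (Y - A)"
    then have "(B \<union> D) \<inter> A = B" "B \<union> D - A = D" by auto
    then show "bernoulli_weight Y p (B \<union> D) * (f ((B \<union> D) \<inter> A) * g (B \<union> D - A))
        = bernoulli_weight A p B * f B * (bernoulli_weight (Y - A) p D * g D)"
      using bernoulli_weight_Un[OF assms, of B D p] \<open>B \<in> Pow A\<close> \<open>D \<in> Pow (Y - A)\<close>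
      by simp
  qed
  then show ?thesis
    unfolding bernoulli_expectation_def by (simp add: sum_product)
qed

lemma bernoulli_expectation_restrict:
  assumes "finite Y" "A \<subseteq> Y" "\<And>E. f E = f (E \<inter> A)"
  shows "bernoulli_expectation Y p f = bernoulli_expectation A p f"
  using bernoulli_expectation_mult_split[OF assms(1,2), of p f "\<lambda>_. 1"]
    bernoulli_expectation_const[of "Y - A" p 1] assms by simp

lemma bernoulli_expectation_prod_local:
  assumes "finite I" "finite Y" "\<forall>i\<in>I. A i \<subseteq> Y" "pairwise (\<lambda>i j. disjnt (A i) (A j)) I"
    "\<forall>i\<in>I. \<forall>E. f i E = f i (E \<inter> A i)"
  shows "bernoulli_expectation Y p (\<lambda>E. \<Prod>i\<in>I. f i E) = (\<Prod>i\<in>I. bernoulli_expectation Y p (f i))"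
  using assms
proof (induction I arbitrary: Y rule: finite_induct)
  case empty
  then show ?case by (simp add: bernoulli_expectation_const)
next
  case (insert i J)
  have Ai: "A i \<subseteq> Y" using insert.prems(2) by blast
  have fi: "\<And>E. f i E = f i (E \<inter> A i)" using insert.prems(4) by blast
  have disj: "A i \<inter> A j = {}" if "j \<in> J" for j
    using insert.prems(3) insert.hyps(2) that unfolding pairwise_def disjnt_def by force
  have fj: "f j E = f j (E - A i)" if "j \<in> J" for j E
  proof -
    have loc: "\<And>E. f j E = f j (E \<inter> A j)" using insert.prems(4) that by blast
    have "E \<inter> A j = (E - A i) \<inter> A j" using disj[OF that] by auto
    then show ?thesis using loc[of E] loc[of "E - A i"] by simp
  qed
  have restrict: "bernoulli_expectation (Y - A i) p (f j) = bernoulli_expectation Y p (f j)"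
    if "j \<in> J" for j
  proof -
    have "A j \<subseteq> Y - A i" using insert.prems(2) disj[OF that] that by auto
    moreover have "A j \<subseteq> Y" using insert.prems(2) that by blast
    moreover have "\<And>E. f j E = f j (E \<inter> A j)" using insert.prems(4) that by blast
    ultimately show ?thesis using insert.prems(1)
      by (metis bernoulli_expectation_restrict finite_Diff)
  qed
  have "bernoulli_expectation Y p (\<lambda>E. \<Prod>j\<in>insert i J. f j E)
      = bernoulli_expectation Y p (\<lambda>E. f i (E \<inter> A i) * (\<Prod>j\<in>J. f j (E - A i)))"
  proof -
    have "(\<Prod>j\<in>insert i J. f j E) = f i (E \<inter> A i) * (\<Prod>j\<in>J. f j (E - A i))" for E
    proof -
      have "(\<Prod>j\<in>J. f j E) = (\<Prod>j\<in>J. f j (E - A i))" by (rule prod.cong[OF refl fj])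
      then show ?thesis using insert.hyps fi[of E] by simp
    qed
    then show ?thesis by simp
  qed
  also have "\<dots> = bernoulli_expectation (A i) p (f i)
      * bernoulli_expectation (Y - A i) p (\<lambda>E. \<Prod>j\<in>J. f j E)"
    by (rule bernoulli_expectation_mult_split[OF insert.prems(1) Ai])
  also have "bernoulli_expectation (Y - A i) p (\<lambda>E. \<Prod>j\<in>J. f j E)
      = (\<Prod>j\<in>J. bernoulli_expectation (Y - A i) p (f j))"
  proof (rule insert.IH)
    show "finite (Y - A i)" using insert.prems(1) by blast
    show "\<forall>j\<in>J. A j \<subseteq> Y - A i" using insert.prems(2) disj by blast
    show "pairwise (\<lambda>i j. disjnt (A i) (A j)) J" using insert.prems(3) by (simp add: pairwise_insert)
    show "\<forall>j\<in>J. \<forall>E. f j E = f j (E \<inter> A j)" using insert.prems(4) by blast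
  qed
  finally show ?case
    using insert.hyps restrict bernoulli_expectation_restrict[of Y "A i" "f i", OF insert.prems(1) Ai fi]
    by simp
qed

lemma bernoulli_prob_disjoint:
  assumes "finite Y" "C \<subseteq> Y"
  shows "bernoulli_expectation Y p (\<lambda>E. of_bool (E \<inter> C = {})) = (1 - p) ^ card C"
proof -
  have "bernoulli_expectation Y p (\<lambda>E. of_bool (E \<inter> C = {}))
      = bernoulli_expectation C p (\<lambda>E. of_bool (E \<inter> C = {}))"
    using assms by (intro bernoulli_expectation_restrict) auto
  also have "\<dots> = (\<Sum>B\<in>Pow C. bernoulli_weight C p B * of_bool (B = {}))"
    unfolding bernoulli_expectation_def by (intro sum.cong) (auto simp: Int_absorb2)
  also have "\<dots> = (\<Sum>B\<in>Pow C \<inter> {B. B = {}}. bernoulli_weight C p B)"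
    using assms by (intro sum_mult_of_bool_eq) (auto intro: finite_subset)
  also have "Pow C \<inter> {B. B = {}} = {{}}" by auto
  finally show ?thesis by (simp add: bernoulli_weight_def)
qed

lemma bernoulli_prob_mem:
  assumes "finite Y" "e \<in> Y"
  shows "bernoulli_expectation Y p (\<lambda>E. of_bool (e \<in> E)) = p"
proof -
  have "bernoulli_expectation Y p (\<lambda>E. of_bool (e \<in> E))
      = bernoulli_expectation {e} p (\<lambda>E. of_bool (e \<in> E))"
    using assms by (intro bernoulli_expectation_restrict) auto
  also have "Pow {e} = {{}, {e}}" by blast
  then have "bernoulli_expectation {e} p (\<lambda>E. of_bool (e \<in> E)) = p"
    unfolding bernoulli_expectation_def by (simp add: bernoulli_weight_def)
  finally show ?thesis .
qed

section \<open>Star separations in \<open>G(n,p)\<close>\<close>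

definition edges_from :: "'a \<Rightarrow> 'a set \<Rightarrow> 'a set set" where
  "edges_from x T = (\<lambda>t. {x, t}) ` T"

lemma card_edges_from: "card (edges_from x T) = card T"
  unfolding edges_from_def by (rule card_image) (auto simp: inj_on_def doubleton_eq_iff)

lemma edges_from_insert: "edges_from x (insert a T) = insert {x, a} (edges_from x T)"
  unfolding edges_from_def by simp

lemma finite_all_edges: "finite V \<Longrightarrow> finite (all_edges V)"
  unfolding all_edges_def by (rule finite_subset[of _ "Pow V"]) auto

lemma edges_from_subset_all_edges:
  "x \<in> V \<Longrightarrow> T \<subseteq> V - {x} \<Longrightarrow> edges_from x T \<subseteq> all_edges V"
  unfolding edges_from_def all_edges_def by (auto simp: card_insert_if)

definition star_event ::
    "'a set \<Rightarrow> 'a \<Rightarrow> 'a set \<Rightarrow> ('a \<Rightarrow> 'a set set \<Rightarrow> bool) \<Rightarrow> 'a set set \<Rightarrow> bool" where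
  "star_event V a S Q E \<longleftrightarrow> E \<inter> edges_from a S = {} \<and> (\<forall>x\<in>V - insert a S. Q x E)"

lemma prob_star_event:
  fixes Q :: "'a \<Rightarrow> 'a set set \<Rightarrow> bool"
  assumes V: "finite V" "a \<in> V" "S \<subseteq> V - {a}"
    and local: "\<And>x E. x \<in> V - insert a S \<Longrightarrow> Q x E = Q x (E \<inter> edges_from x (insert a S))"
  shows "bernoulli_expectation (all_edges V) p (\<lambda>E. of_bool (star_event V a S Q E))
    = (1 - p) ^ card S
      * (\<Prod>x\<in>V - insert a S. bernoulli_expectation (all_edges V) p (\<lambda>E. of_bool (Q x E)))"
proof -
  \<comment> \<open>the edges from \<open>x\<close> to the rest of \<open>{a} \<union> S\<close>; disjoint for distinct \<open>x \<notin> S\<close>\<close>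
  define A where "A x = edges_from x (insert a S - {x})" for x
  define f :: "'a \<Rightarrow> 'a set set \<Rightarrow> real"
    where "f x E = of_bool (if x = a then E \<inter> edges_from a S = {} else Q x E)" for x E
  have aS: "a \<notin> S" using V by auto
  have I: "V - S = insert a (V - insert a S)" using V by auto
  have fin: "finite (V - S)" "finite (all_edges V)"
    using V by (auto intro: finite_all_edges)
  have "bernoulli_expectation (all_edges V) p (\<lambda>E. \<Prod>x\<in>V - S. f x E)
      = (\<Prod>x\<in>V - S. bernoulli_expectation (all_edges V) p (f x))"
  proof (rule bernoulli_expectation_prod_local[OF fin])
    show "\<forall>x\<in>V - S. A x \<subseteq> all_edges V"
      unfolding A_def using V by (intro ballI edges_from_subset_all_edges) auto
    show "pairwise (\<lambda>x y. disjnt (A x) (A y)) (V - S)"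
      unfolding pairwise_def disjnt_def A_def edges_from_def by (auto simp: doubleton_eq_iff)
    show "\<forall>x\<in>V - S. \<forall>E. f x E = f x (E \<inter> A x)"
    proof (intro ballI allI)
      fix x E assume x: "x \<in> V - S"
      show "f x E = f x (E \<inter> A x)"
      proof (cases "x = a")
        case True
        then show ?thesis using aS by (simp add: f_def A_def Int_assoc)
      next
        case False
        then have "x \<in> V - insert a S" "A x = edges_from x (insert a S)"
          using x by (auto simp: A_def)
        then show ?thesis using False local[of x E] by (simp add: f_def)
      qed
    qed
  qed
  moreover have "(\<Prod>x\<in>V - S. f x E) = of_bool (star_event V a S Q E)" for E
    unfolding I using fin(1) by (simp add: f_def star_event_def prod_of_bool_eq cong: prod.cong)
  moreover have "bernoulli_expectation (all_edges V) p (f a) = (1 - p) ^ card S"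
    unfolding f_def card_edges_from[of a S, symmetric] using V fin(2)
    by (simp add: bernoulli_prob_disjoint edges_from_subset_all_edges)
  moreover have "f x = (\<lambda>E. of_bool (Q x E))" if "x \<in> V - insert a S" for x
    using that by (auto simp: f_def)
  ultimately show ?thesis
    unfolding I using fin(1) by simp
qed

lemma prob_edge:
  assumes "finite V" "x \<in> V" "a \<in> V - {x}"
  shows "bernoulli_expectation (all_edges V) p (\<lambda>E. of_bool ({x, a} \<in> E)) = p"
  using assms by (intro bernoulli_prob_mem finite_all_edges) (auto simp: all_edges_def)

lemma prob_no_edges_from:
  assumes "finite V" "x \<in> V" "T \<subseteq> V - {x}"
  shows "bernoulli_expectation (all_edges V) p (\<lambda>E. of_bool (E \<inter> edges_from x T = {}))
    = (1 - p) ^ card T"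
  using bernoulli_prob_disjoint[OF finite_all_edges edges_from_subset_all_edges] assms
  by (simp add: card_edges_from)

lemma prob_edge_or_no_edges_from:
  assumes "finite V" "x \<in> V" "a \<in> V - {x}" "T \<subseteq> V - {x, a}"
  shows "bernoulli_expectation (all_edges V) p
      (\<lambda>E. of_bool ({x, a} \<in> E \<or> E \<inter> edges_from x T = {})) = p + (1 - p) ^ (card T + 1)"
proof -
  have "finite T" "a \<notin> T" "insert a T \<subseteq> V - {x}" using assms by (auto intro: finite_subset)
  have "(\<lambda>E. of_bool ({x, a} \<in> E \<or> E \<inter> edges_from x T = {}) :: real)
      = (\<lambda>E. of_bool ({x, a} \<in> E) + of_bool (E \<inter> edges_from x (insert a T) = {}))"
    by (auto simp: fun_eq_iff edges_from_insert)
  then have "bernoulli_expectation (all_edges V) p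
      (\<lambda>E. of_bool ({x, a} \<in> E \<or> E \<inter> edges_from x T = {}))
      = bernoulli_expectation (all_edges V) p (\<lambda>E. of_bool ({x, a} \<in> E))
        + bernoulli_expectation (all_edges V) p (\<lambda>E. of_bool (E \<inter> edges_from x (insert a T) = {}))"
    by (simp only: bernoulli_expectation_add)
  also have "\<dots> = p + (1 - p) ^ (card T + 1)"
    using prob_edge[OF assms(1-3)] prob_no_edges_from[OF assms(1,2) \<open>insert a T \<subseteq> V - {x}\<close>]
      \<open>finite T\<close> \<open>a \<notin> T\<close> by simp
  finally show ?thesis .
qed

lemma proper_star_separation_events:
  assumes "is_proper_star_k_separation V E k a S"
  shows "star_event V a S (\<lambda>x E. {x, a} \<in> E \<or> E \<inter> edges_from x S = {}) E"
    and "\<not> star_event V a S (\<lambda>x E. E \<inter> edges_from x S = {}) E"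
    and "\<not> star_event V a S (\<lambda>x E. {x, a} \<in> E) E"
proof -
  have a: "a \<in> V" and S_st: "S \<subseteq> V - st V E a" and "S \<noteq> {}" and "S \<noteq> V - st V E a"
    and sep: "\<forall>s\<in>S. \<forall>y\<in>V - st V E a - S. {s, y} \<notin> E" and not_sep: "\<not> is_separation E V S"
    using assms unfolding is_proper_star_k_separation_def is_star_separation_def is_separation_def
    by auto
  have no_a: "E \<inter> edges_from a S = {}"
    using S_st unfolding st_def edges_from_def by auto
  show "star_event V a S (\<lambda>x E. {x, a} \<in> E \<or> E \<inter> edges_from x S = {}) E"
    unfolding star_event_def
  proof (intro conjI ballI no_a)
    fix x assume x: "x \<in> V - insert a S"
    show "{x, a} \<in> E \<or> E \<inter> edges_from x S = {}"
    proof (cases "{x, a} \<in> E")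
      case False
      then have "x \<in> V - st V E a - S" using x by (auto simp: st_def insert_commute)
      then have "{x, t} \<notin> E" if "t \<in> S" for t
        using sep that by (metis insert_commute)
      then show ?thesis unfolding edges_from_def by auto
    qed simp
  qed
  show "\<not> star_event V a S (\<lambda>x E. E \<inter> edges_from x S = {}) E"
  proof
    assume "star_event V a S (\<lambda>x E. E \<inter> edges_from x S = {}) E"
    then have iso: "E \<inter> edges_from y S = {}" if "y \<in> V - insert a S" for y
      using that unfolding star_event_def by blast
    have "is_separation E V S"
      unfolding is_separation_def
    proof (intro conjI ballI)
      show "S \<subseteq> V" "S \<noteq> {}" "S \<noteq> V" using S_st \<open>S \<noteq> {}\<close> a by (auto simp: st_def)
      fix s y assume s: "s \<in> S" and y: "y \<in> V - S"
      show "{s, y} \<notin> E"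
      proof (cases "y = a")
        case True
        then show ?thesis using no_a s by (auto simp: edges_from_def insert_commute)
      next
        case False
        then show ?thesis using iso[of y] y s by (auto simp: edges_from_def insert_commute)
      qed
    qed
    with not_sep show False ..
  qed
  show "\<not> star_event V a S (\<lambda>x E. {x, a} \<in> E) E"
  proof
    assume "star_event V a S (\<lambda>x E. {x, a} \<in> E) E"
    then have "V - st V E a \<subseteq> S"
      unfolding star_event_def st_def by (auto simp: insert_commute)
    with S_st \<open>S \<noteq> V - st V E a\<close> show False by blast
  qed
qed

lemma prob_proper_star_separation_le:
  fixes V :: "'a set"
  assumes V: "finite V" "a \<in> V" "S \<subseteq> V - {a}" "card S = k" and p: "0 \<le> p" "p \<le> 1"
  defines "m \<equiv> card V - k - 1"
  shows "bernoulli_expectation (all_edges V) p (\<lambda>E. of_bool (is_proper_star_k_separation V E k a S))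
    \<le> (1 - p) ^ k * ((p + (1 - p) ^ (k + 1)) ^ m - max (p ^ m) (((1 - p) ^ k) ^ m))"
proof -
  let ?P = "\<lambda>Q. bernoulli_expectation (all_edges V) p (\<lambda>E. of_bool (star_event V a S Q E))"
  let ?proper = "bernoulli_expectation (all_edges V) p
    (\<lambda>E. of_bool (is_proper_star_k_separation V E k a S))"
  define adjacent_or_isolated where "adjacent_or_isolated x E \<longleftrightarrow> {x, a} \<in> E \<or> E \<inter> edges_from x S = {}" for x E
  define isolated where "isolated x E \<longleftrightarrow> E \<inter> edges_from x S = {}" for x E
  define adjacent where "adjacent x E \<longleftrightarrow> {x, a} \<in> E" for x E
  have "finite S" "a \<notin> S" using V by (auto intro: finite_subset)
  then have card_out: "card (V - insert a S) = m"
    using V unfolding m_def by (subst card_Diff_subset) auto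
  have out: "x \<in> V" "a \<in> V - {x}" "S \<subseteq> V - {x, a}" "S \<subseteq> V - {x}" if "x \<in> V - insert a S" for x
    using that V by auto
  have local: "Q x E = Q x (E \<inter> edges_from x (insert a S))"
    if "Q \<in> {adjacent_or_isolated, isolated, adjacent}" for Q x E
    using that unfolding adjacent_or_isolated_def isolated_def adjacent_def edges_from_def by auto
  have P: "?P Q = (1 - p) ^ k
      * (\<Prod>x\<in>V - insert a S. bernoulli_expectation (all_edges V) p (\<lambda>E. of_bool (Q x E)))"
    if "Q \<in> {adjacent_or_isolated, isolated, adjacent}" for Q
    using prob_star_event[of V a S Q, OF V(1-3) local[OF that]] V(4) by simp
  have P_ai: "?P adjacent_or_isolated = (1 - p) ^ k * (p + (1 - p) ^ (k + 1)) ^ m"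
    unfolding P[of adjacent_or_isolated, simplified] card_out[symmetric] prod_constant[symmetric]
    unfolding adjacent_or_isolated_def
    using prob_edge_or_no_edges_from[OF V(1) out(1-3), unfolded V(4)]
    by (intro arg_cong2[where f = "(*)"] refl prod.cong) blast
  have P_iso: "?P isolated = (1 - p) ^ k * ((1 - p) ^ k) ^ m"
    unfolding P[of isolated, simplified] card_out[symmetric] prod_constant[symmetric]
    unfolding isolated_def
    using prob_no_edges_from[OF V(1) out(1,4), unfolded V(4)]
    by (intro arg_cong2[where f = "(*)"] refl prod.cong) blast
  have P_adj: "?P adjacent = (1 - p) ^ k * p ^ m"
    unfolding P[of adjacent, simplified] card_out[symmetric] prod_constant[symmetric]
    unfolding adjacent_def
    using prob_edge[OF V(1) out(1,2)]
    by (intro arg_cong2[where f = "(*)"] refl prod.cong) blast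
  have mono: "star_event V a S adjacent_or_isolated E"
    if "Q \<in> {isolated, adjacent}" "star_event V a S Q E" for Q E
    using that unfolding star_event_def adjacent_or_isolated_def isolated_def adjacent_def by auto
  have bound: "?proper \<le> ?P adjacent_or_isolated - ?P Q" if Q: "Q \<in> {isolated, adjacent}" for Q
  proof -
    have "of_bool (is_proper_star_k_separation V E k a S)
        \<le> of_bool (star_event V a S adjacent_or_isolated E) - (of_bool (star_event V a S Q E) :: real)"
      for E
      using proper_star_separation_events[of V E k a S] mono[OF Q, of E] Q
      unfolding adjacent_or_isolated_def isolated_def adjacent_def by auto
    then show ?thesis
      unfolding bernoulli_expectation_diff[symmetric] by (intro bernoulli_expectation_mono[OF p])
  qed
  show ?thesis
    using bound[of isolated] bound[of adjacent] unfolding P_ai P_iso P_adj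
    by (simp add: max_def right_diff_distrib)
qed

definition star_candidates :: "'a set \<Rightarrow> nat \<Rightarrow> ('a \<times> 'a set) set" where
  "star_candidates V k = (SIGMA a:V. {S. S \<subseteq> V - {a} \<and> card S = k})"

lemma card_star_candidates:
  "finite V \<Longrightarrow> card (star_candidates V k) = card V * (card V - 1 choose k)"
  unfolding star_candidates_def by (simp add: n_subsets)

lemma proper_star_separation_candidate:
  "is_proper_star_k_separation V E k a S \<Longrightarrow> (a, S) \<in> star_candidates V k"
  unfolding is_proper_star_k_separation_def is_star_separation_def star_candidates_def st_def
  by auto

lemma gnp_expectation_U:
  assumes "finite V"
  shows "gnp_expectation V p (\<lambda>E. real (U V k E))
    = (\<Sum>(a, S)\<in>star_candidates V k.
        bernoulli_expectation (all_edges V) p (\<lambda>E. of_bool (is_proper_star_k_separation V E k a S)))"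
proof -
  have fin: "finite (star_candidates V k)"
    using assms unfolding star_candidates_def by auto
  have "real (U V k E) = (\<Sum>(a, S)\<in>star_candidates V k. of_bool (is_proper_star_k_separation V E k a S))"
    for E
  proof -
    have "{(a, S). is_proper_star_k_separation V E k a S}
        = star_candidates V k \<inter> {(a, S). is_proper_star_k_separation V E k a S}"
      using proper_star_separation_candidate by auto
    then show ?thesis
      unfolding U_def using fin by (simp add: case_prod_unfold)
  qed
  then show ?thesis
    unfolding gnp_expectation_eq_bernoulli bernoulli_expectation_def
    by (simp add: sum_distrib_left case_prod_unfold sum.swap[of _ "star_candidates V k"])
qed

lemma prob_proper_star_separation_bounds:
  fixes V :: "'a set"
  assumes "finite V" "(a, S) \<in> star_candidates V k" "0 < k" "0 \<le> p" "p \<le> 1"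
  defines "n \<equiv> card V" and "q \<equiv> 1 - p" and "r \<equiv> p + (1 - p) ^ (k + 1)"
  shows "bernoulli_expectation (all_edges V) p (\<lambda>E. of_bool (is_proper_star_k_separation V E k a S))
      \<le> real n * q ^ (2 * k + 1) * r ^ (n - k - 2)
    \<and> bernoulli_expectation (all_edges V) p (\<lambda>E. of_bool (is_proper_star_k_separation V E k a S))
      \<le> real k * real n * p\<^sup>2 * q ^ (k + 1) * r ^ (n - k - 2)"
proof -
  define m where "m = n - k - 1"
  let ?prob = "bernoulli_expectation (all_edges V) p
    (\<lambda>E. of_bool (is_proper_star_k_separation V E k a S))"
  have q: "q = 1 - p" unfolding q_def ..
  have r: "r = p + q ^ (k + 1)" unfolding r_def q_def ..
  have aS: "a \<in> V" "S \<subseteq> V - {a}" "card S = k" using assms(2) by (auto simp: star_candidates_def)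
  then have "k \<le> n - 1" using assms(1) unfolding n_def by (metis card_Diff_singleton card_mono finite_Diff)
  then have n: "real n = real m + real k + 1" "n - k - 2 = m - 1" using assms(3) by (auto simp: m_def)
  note prob = prob_proper_star_separation_le[OF assms(1) aS assms(4,5), folded q, folded r,
      folded n_def, folded m_def]
  have "0 \<le> q" "0 \<le> r" using assms(4,5) by (auto simp: q r)
  have "?prob \<le> real m * (q ^ (2 * k + 1) * r ^ (m - 1))"
    using order_trans[OF prob star_bound_first[OF assms(4,5) q r]] by (simp only: mult.assoc)
  also have "\<dots> \<le> real n * (q ^ (2 * k + 1) * r ^ (m - 1))"
    using n \<open>0 \<le> q\<close> \<open>0 \<le> r\<close> by (intro mult_right_mono) auto
  finally have "?prob \<le> real n * (q ^ (2 * k + 1) * r ^ (m - 1))" .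
  moreover have "?prob \<le> real k * real n * p\<^sup>2 * q ^ (k + 1) * r ^ (m - 1)"
    using order_trans[OF prob star_bound_second[OF assms(4,5) q r]] assms(3)
    unfolding n by simp
  ultimately show ?thesis unfolding n by (simp only: mult.assoc)
qed

theorem lemma3p3:
  fixes V :: "'a set" and n k :: nat and p :: real
  assumes "finite V" and "card V = n" and "0 < k" and "0 \<le> p" and "p \<le> 1"
  shows "gnp_expectation V p (\<lambda>E. real (U V k E))
           \<le> real n ^ 2 * real ((n - 1) choose k) * (1 - p) ^ (2 * k + 1)
             * (p + (1 - p) ^ (k + 1)) ^ (n - k - 2)
       \<and> gnp_expectation V p (\<lambda>E. real (U V k E))
           \<le> real k * real n ^ 2 * real ((n - 1) choose k) * (1 - p) ^ (k + 1) * p ^ 2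
             * (p + (1 - p) ^ (k + 1)) ^ (n - k - 2)"
proof -
  let ?r = "p + (1 - p) ^ (k + 1)"
  have "gnp_expectation V p (\<lambda>E. real (U V k E))
        \<le> real (card (star_candidates V k)) * (real n * (1 - p) ^ (2 * k + 1) * ?r ^ (n - k - 2))
      \<and> gnp_expectation V p (\<lambda>E. real (U V k E))
        \<le> real (card (star_candidates V k))
          * (real k * real n * p\<^sup>2 * (1 - p) ^ (k + 1) * ?r ^ (n - k - 2))"
    unfolding gnp_expectation_U[OF assms(1)]
    using prob_proper_star_separation_bounds[OF assms(1) _ assms(3-5), unfolded assms(2)]
    by (auto intro!: sum_bounded_above)
  then show ?thesis
    unfolding card_star_candidates[OF assms(1)] assms(2)
    by (simp add: power2_eq_square mult_ac)
qed

end
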